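(* Let $\mathbb K\in\{\mathbb R,\mathbb C\}$ and $1\le p<\infty$. Then $$\exp\left\{\int_{S_{\ell_2^d(\mathbb K)}}\log\left(\frac1{\|z\|_p}\right)dS(z)\right\}\asymp d^{\frac12-\frac1p},$$ and for $p=\infty$, $$\left(\frac d{\log d}\right)^{1/2}\prec \exp\left\{\int_{S_{\ell_2^d(\mathbb K)}}\log\left(\frac1{\|z\|_\infty}\right)dS(z)\right\}\prec d^{1/2}.$$
   Context: $dS$ denotes the normalized surface (Lebesgue) measure on the unit sphere $S_{\ell_2^d(\mathbb K)}$ of $\mathbb K^d$ with the Euclidean norm; $\|z\|_p$ is the $\ell_p$ norm on $\mathbb K^d$. For positive sequences indexed by $d$, $a_d\prec b_d$ means there is a constant $L>0$ independent of $d$ (possibly depending on $p$ and $\mathbb K$) with $a_d\le Lb_d$; $a_d\asymp b_d$ means $a_d\prec b_d$ and $b_d\prec a_d$. *)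

theory Defs
  imports "HOL-Analysis.Analysis"
begin

text \<open>The space K^d is modelled as extensional functions on the index set {..<d}
  with values in K (K = real or complex), carrying the product Lebesgue measure
  (for K = complex, lborel on complex is Lebesgue measure on R^2, so this is
  Lebesgue measure on R^(2d)).\<close>

definition Kd_measure :: "'a itself \<Rightarrow> nat \<Rightarrow> (nat \<Rightarrow> 'a::euclidean_space) measure" where
  "Kd_measure _ d = PiM {..<d} (\<lambda>_. lborel)"

definition l2norm :: "nat \<Rightarrow> (nat \<Rightarrow> 'a::real_normed_vector) \<Rightarrow> real" where
  "l2norm d z = sqrt (\<Sum>i<d. (norm (z i))\<^sup>2)"

definition pnorm :: "nat \<Rightarrow> real \<Rightarrow> (nat \<Rightarrow> 'a::real_normed_vector) \<Rightarrow> real" where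
  "pnorm d p z = (\<Sum>i<d. norm (z i) powr p) powr (1 / p)"

definition infnorm_d :: "nat \<Rightarrow> (nat \<Rightarrow> 'a::real_normed_vector) \<Rightarrow> real" where
  "infnorm_d d z = Max (insert 0 ((\<lambda>i. norm (z i)) ` {..<d}))"

definition unit_ball_d :: "'a itself \<Rightarrow> nat \<Rightarrow> (nat \<Rightarrow> 'a::euclidean_space) set" where
  "unit_ball_d K d = {x \<in> space (Kd_measure K d). l2norm d x \<le> 1}"

text \<open>Integral against the normalized surface measure dS on the unit sphere of
  l_2^d(K), realised as the (normalized) cone measure:
  \<integral>_S f dS = (1 / vol(B)) \<integral>_B f(x/|x|_2) dx.\<close>

definition sphere_integral ::
  "'a itself \<Rightarrow> nat \<Rightarrow> ((nat \<Rightarrow> 'a::euclidean_space) \<Rightarrow> real) \<Rightarrow> real" where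
  "sphere_integral K d f =
     (\<integral>x. indicator (unit_ball_d K d) x *
            f (restrict (\<lambda>i. x i /\<^sub>R l2norm d x) {..<d}) \<partial>Kd_measure K d)
     / measure (Kd_measure K d) (unit_ball_d K d)"

end

(* Write S_q(z) = sum_i |z_i|^q, so that ln (1 / |z|_p) = - ln S_p / p, and realise the normalised
   surface measure as the cone measure, the image of the uniform distribution on the unit ball under
   x |-> x / |x|_2.  On the sphere the power-mean inequality bounds ln S_p by (1 - p/2) ln d, from below
   for p >= 2 and from above for p <= 2.  The opposite bound comes from Jensen's inequality
   E ln S_q <= ln E S_q together with the moment estimate E |z_i|^q <= C (16 q / d)^(q/2), which is
   obtained by integrating over the ball one coordinate at a time; for p < 2 it is transferred from
   4 - p by the Cauchy-Schwarz inequality S_p S_(4-p) >= 1.  For p = infinity, |z|_inf >= d^(-1/2)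
   gives the upper bound, and |z|_inf^q <= S_q with q = ln d the lower one. *)

theory Submission
  imports Defs "HOL-Probability.Probability_Measure"
begin

lemma powr_mult_one_minus_powr_le:
  fixes s a b :: real
  assumes s: "0 < s" "s < 1" and a: "a > 0" and b: "b > 0"
  shows "s powr a * (1 - s) powr b \<le> (a / b) powr a"
proof -
  have "ln (s * b / a) \<le> s * b / a - 1"
    using s a b by (intro ln_le_minus_one) auto
  then have "a * ln (s * b / a) \<le> s * b - a"
    using a by (simp add: field_simps)
  moreover have "b * ln (1 - s) \<le> b * (- s)"
    using ln_le_minus_one[of "1 - s"] s b by (intro mult_left_mono) auto
  ultimately have "a * ln s + b * ln (1 - s) \<le> a * ln (a / b)"
    using s a b by (simp add: ln_mult ln_div algebra_simps)
  then show ?thesis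
    using s a b by (simp add: ln_mult ln_powr flip: ln_le_cancel_iff)
qed

lemma powr_mult_one_minus_sq_powr_le:
  fixes t q m :: real
  assumes t: "t \<ge> 0" and q: "q > 0" and m: "m > 0"
  shows "t powr q * max 0 (1 - t\<^sup>2) powr (m / 2) \<le> (2 * q / m) powr (q / 2) * max 0 (1 - t\<^sup>2) powr (m / 4)"
proof -
  consider "t = 0" | "t\<^sup>2 \<ge> 1" | "0 < t\<^sup>2" "t\<^sup>2 < 1"
    using t by force
  then show ?thesis
  proof cases
    case 3
    have "t powr q * (1 - t\<^sup>2) powr (m / 4) = (t\<^sup>2) powr (q / 2) * (1 - t\<^sup>2) powr (m / 4)"
      using t by (simp add: powr_powr flip: powr_numeral)
    also have "\<dots> \<le> ((q / 2) / (m / 4)) powr (q / 2)"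
      using 3 q m by (intro powr_mult_one_minus_powr_le) auto
    also have "(q / 2) / (m / 4) = 2 * q / m"
      by simp
    finally have "t powr q * (1 - t\<^sup>2) powr (m / 4) * (1 - t\<^sup>2) powr (m / 4)
        \<le> (2 * q / m) powr (q / 2) * (1 - t\<^sup>2) powr (m / 4)"
      by (intro mult_right_mono) auto
    then show ?thesis
      using 3 by (simp add: mult.assoc flip: powr_add)
  qed (use q m in auto)
qed

lemma max_one_minus_powr_le:
  fixes s b :: real
  assumes "b \<ge> 0" and "s \<ge> 0"
  shows "max 0 (1 - s) powr b \<le> max 0 (1 - s / 2) powr (2 * b)"
proof (cases "s \<ge> 1")
  case False
  have "(1 - s) powr b \<le> ((1 - s / 2)\<^sup>2) powr b"
    using False assms by (intro powr_mono2) (auto simp: power2_eq_square algebra_simps)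
  then show ?thesis
    using False assms by (simp add: powr_powr flip: powr_numeral)
qed simp

lemma quarter_powr_le:
  fixes q n k :: real
  assumes q: "q > 0" and n: "n > 0" and k: "k \<ge> 1"
  shows "(1 / 4) powr (k * n / 2) \<le> (16 * q / n) powr (q / 2)"
proof -
  have "ln (1 / (16 * q / n)) \<le> 1 / (16 * q / n) - 1"
    using q n by (intro ln_le_minus_one) auto
  then have rhs: "q / 2 - n / 32 \<le> ln ((16 * q / n) powr (q / 2))"
    using q n by (simp add: ln_div ln_powr field_simps)
  have "ln 2 \<le> k * ln (2::real)"
    using mult_right_mono[OF k, of "ln 2"] by simp
  then have "1 / 2 \<le> k * ln 2"
    using ln2_ge_two_thirds by linarith
  then have "n * (1 / 2) \<le> n * (k * ln 2)"
    using n by (intro mult_left_mono) auto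
  moreover have "ln ((1 / 4) powr (k * n / 2)) = - (n * (k * ln 2))"
    by (simp add: ln_powr ln_div ln_realpow[of 2 2, simplified])
  ultimately have "ln ((1 / 4) powr (k * n / 2)) \<le> ln ((16 * q / n) powr (q / 2))"
    using rhs q n by linarith
  then show ?thesis
    using q n by (subst (asm) ln_le_cancel_iff) auto
qed

lemma sum_powr_le_card_powr:
  fixes y :: "'i \<Rightarrow> real"
  assumes A: "finite A" "A \<noteq> {}" and y: "\<And>i. i \<in> A \<Longrightarrow> 0 \<le> y i" and s: "0 < s" "s \<le> 1"
  shows "(\<Sum>i\<in>A. y i powr s) \<le> card A powr (1 - s) * (\<Sum>i\<in>A. y i) powr s"
proof (cases "(\<Sum>i\<in>A. y i) = 0")
  case True
  then show ?thesis
    using A y by (simp add: sum_nonneg_eq_0_iff)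
next
  case False
  define Y where "Y = (\<Sum>i\<in>A. y i)"
  define c where "c = Y / card A"
  have "Y > 0"
    using False y unfolding Y_def by (metis order_less_le sum_nonneg)
  then have c: "c > 0"
    using A by (simp add: c_def card_gt_0_iff)
  have "y i powr s \<le> c powr s * (s * (y i / c) + (1 - s))" if "i \<in> A" for i
  proof (cases "y i = 0")
    case False
    then have "y i powr s = c powr s * ((y i / c) powr s * 1 powr (1 - s))"
      using y[OF that] c by (simp add: powr_divide)
    also have "\<dots> \<le> c powr s * (s * (y i / c) + (1 - s) * 1)"
      using False y[OF that] c s by (intro mult_left_mono Youngs_inequality_0) auto
    finally show ?thesis
      by simp
  qed (use s c in simp)
  then have "(\<Sum>i\<in>A. y i powr s) \<le> (\<Sum>i\<in>A. c powr s * (s * (y i / c) + (1 - s)))"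
    by (rule sum_mono)
  also have "\<dots> = c powr s * ((\<Sum>i\<in>A. s * (y i / c)) + card A * (1 - s))"
    by (simp add: sum.distrib flip: sum_distrib_left)
  also have "(\<Sum>i\<in>A. s * (y i / c)) = s / c * Y"
    by (simp add: Y_def flip: sum_distrib_left sum_divide_distrib)
  also have "s / c * Y + card A * (1 - s) = card A"
    using \<open>Y > 0\<close> A by (simp add: c_def field_simps)
  also have "c powr s * card A = card A powr (1 - s) * Y powr s"
    using \<open>Y > 0\<close> A by (simp add: c_def powr_divide powr_diff)
  finally show ?thesis
    by (simp add: Y_def)
qed

lemma (in prob_space) integral_ln_le:
  fixes f :: "'a \<Rightarrow> real"
  assumes f: "integrable M f" and ln_f: "integrable M (\<lambda>x. ln (f x))"
    and pos: "AE x in M. 0 < f x" and A: "integral\<^sup>L M f \<le> A" "A > 0"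
  shows "(\<integral>x. ln (f x) \<partial>M) \<le> ln A"
proof -
  have "(\<integral>x. ln (f x) \<partial>M) \<le> (\<integral>x. f x / A + (ln A - 1) \<partial>M)"
  proof (rule integral_mono_AE[OF ln_f])
    show "integrable M (\<lambda>x. f x / A + (ln A - 1))"
      using f by simp
    show "AE x in M. ln (f x) \<le> f x / A + (ln A - 1)"
      using pos
    proof eventually_elim
      case (elim x)
      then have "ln (f x / A) \<le> f x / A - 1"
        using A by (intro ln_le_minus_one) auto
      then show ?case
        using elim A by (simp add: ln_div)
    qed
  qed
  also have "\<dots> = integral\<^sup>L M f / A + (ln A - 1)"
    using f by (simp add: prob_space)
  also have "\<dots> \<le> ln A"
    using A by (simp add: divide_le_eq_1)
  finally show ?thesis .
qed

section \<open>Balls in the product of Lebesgue measures\<close>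

lemma nn_integral_lborel_scale:
  fixes f :: "'a::euclidean_space \<Rightarrow> ennreal"
  assumes c: "c > 0" and f[measurable]: "f \<in> borel_measurable borel"
  shows "(\<integral>\<^sup>+y. f y \<partial>lborel) = ennreal (c ^ DIM('a)) * (\<integral>\<^sup>+y. f (c *\<^sub>R y) \<partial>lborel)"
proof -
  have "(\<integral>\<^sup>+y. f y \<partial>lborel) =
      (\<integral>\<^sup>+y. f y \<partial>density (distr lborel borel (\<lambda>x. 0 + c *\<^sub>R x)) (\<lambda>_. \<bar>c\<bar> ^ DIM('a)))"
    using lborel_affine[of c "0::'a"] c by simp
  also have "\<dots> = ennreal (c ^ DIM('a)) * (\<integral>\<^sup>+y. f (c *\<^sub>R y) \<partial>lborel)"
    using c by (simp add: nn_integral_density nn_integral_distr nn_integral_cmult)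
  finally show ?thesis .
qed

lemma emeasure_lborel_scale:
  fixes A :: "'a::euclidean_space set"
  assumes c: "c > 0" and A[measurable]: "A \<in> sets borel"
  shows "emeasure lborel A = ennreal (c ^ DIM('a)) * emeasure lborel ((\<lambda>y. c *\<^sub>R y) -` A)"
proof -
  have cA: "(\<lambda>y. c *\<^sub>R y) -` A \<in> sets (lborel :: 'a measure)"
    using measurable_sets[of "\<lambda>y::'a. c *\<^sub>R y" lborel borel A] by simp
  have "emeasure lborel A = (\<integral>\<^sup>+y. indicator A y \<partial>lborel)"
    by simp
  also have "\<dots> = ennreal (c ^ DIM('a)) * (\<integral>\<^sup>+y. indicator A (c *\<^sub>R y) \<partial>lborel)"
    using c by (intro nn_integral_lborel_scale) auto
  also have "(\<lambda>y. indicator A (c *\<^sub>R y)) = indicator ((\<lambda>y. c *\<^sub>R y) -` A)"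
    by (auto simp: indicator_def)
  finally show ?thesis
    using cA by simp
qed

lemma PiM_lborel_scale:
  fixes I :: "nat set"
  assumes I: "finite I" and c: "c > 0"
  defines "T \<equiv> (\<lambda>x::nat \<Rightarrow> 'a::euclidean_space. restrict (\<lambda>j. c *\<^sub>R x j) I)"
  shows "PiM I (\<lambda>_. lborel::'a measure) =
     density (distr (PiM I (\<lambda>_. lborel)) (PiM I (\<lambda>_. lborel)) T) (\<lambda>_. ennreal (c ^ (DIM('a) * card I)))"
    (is "_ = ?D")
proof -
  interpret product_sigma_finite "\<lambda>_. lborel::'a measure" by standard
  have [measurable]: "T \<in> PiM I (\<lambda>_. lborel) \<rightarrow>\<^sub>M PiM I (\<lambda>_. lborel)"
    unfolding T_def by (intro measurable_restrict) auto
  show ?thesis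
  proof (rule PiM_eqI[symmetric])
  fix A assume A: "\<And>i. i \<in> I \<Longrightarrow> A i \<in> sets (lborel::'a measure)"
  have Av: "(\<lambda>y. c *\<^sub>R y) -` A i \<in> sets (lborel::'a measure)" if "i \<in> I" for i
    using measurable_sets[of "\<lambda>y::'a. c *\<^sub>R y" lborel lborel "A i"] A[OF that] by simp
  have vimage: "T -` Pi\<^sub>E I A \<inter> space (PiM I (\<lambda>_. lborel)) = Pi\<^sub>E I (\<lambda>i. (\<lambda>y. c *\<^sub>R y) -` A i)"
    by (auto simp: T_def space_PiM PiE_def Pi_def extensional_def)
  have "emeasure ?D (Pi\<^sub>E I A) =
      ennreal (c ^ (DIM('a) * card I)) * emeasure (PiM I (\<lambda>_. lborel)) (Pi\<^sub>E I (\<lambda>i. (\<lambda>y. c *\<^sub>R y) -` A i))"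
    using A I by (simp add: emeasure_density emeasure_distr nn_integral_cmult_indicator
        vimage[symmetric] sets_PiM_I_finite)
  also have "\<dots> = (\<Prod>i\<in>I. ennreal (c ^ DIM('a)) * emeasure lborel ((\<lambda>y. c *\<^sub>R y) -` A i))"
    using Av c I by (simp add: emeasure_PiM prod.distrib power_mult ennreal_power[symmetric])
  also have "\<dots> = (\<Prod>i\<in>I. emeasure lborel (A i))"
    using A c by (intro prod.cong refl emeasure_lborel_scale[symmetric]) auto
  finally show "emeasure ?D (Pi\<^sub>E I A) = (\<Prod>i\<in>I. emeasure lborel (A i))" .
  qed (simp_all add: I)
qed

lemma nn_integral_PiM_lborel_scale:
  fixes f :: "(nat \<Rightarrow> 'a::euclidean_space) \<Rightarrow> ennreal"
  assumes I: "finite I" and c: "c > 0" and f[measurable]: "f \<in> borel_measurable (PiM I (\<lambda>_. lborel))"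
  shows "(\<integral>\<^sup>+x. f x \<partial>PiM I (\<lambda>_. lborel)) =
     ennreal (c ^ (DIM('a) * card I)) * (\<integral>\<^sup>+x. f (restrict (\<lambda>j. c *\<^sub>R x j) I) \<partial>PiM I (\<lambda>_. lborel))"
proof -
  have [measurable]: "(\<lambda>x::nat \<Rightarrow> 'a. restrict (\<lambda>j. c *\<^sub>R x j) I) \<in> PiM I (\<lambda>_. lborel) \<rightarrow>\<^sub>M PiM I (\<lambda>_. lborel)"
    by (intro measurable_restrict) auto
  show ?thesis
    by (subst PiM_lborel_scale[OF I c]) (simp add: nn_integral_density nn_integral_distr nn_integral_cmult)
qed

lemma nn_integral_one_minus_sq_powr_le:
  assumes b: "b \<ge> 0"
  shows "(\<integral>\<^sup>+y. ennreal (max 0 (1 - (norm y)\<^sup>2) powr b) \<partial>(lborel::'a::euclidean_space measure))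
     \<le> ennreal (sqrt 2 ^ DIM('a)) * (\<integral>\<^sup>+y. ennreal (max 0 (1 - (norm y)\<^sup>2) powr (2 * b)) \<partial>(lborel::'a measure))"
proof -
  have "(\<integral>\<^sup>+y. ennreal (max 0 (1 - (norm y)\<^sup>2) powr b) \<partial>(lborel::'a measure))
      \<le> (\<integral>\<^sup>+y. ennreal (max 0 (1 - (norm y)\<^sup>2 / 2) powr (2 * b)) \<partial>(lborel::'a measure))"
    using b by (intro nn_integral_mono ennreal_leI max_one_minus_powr_le) auto
  also have "\<dots> = ennreal (sqrt 2 ^ DIM('a)) *
      (\<integral>\<^sup>+y. ennreal (max 0 (1 - (norm (sqrt 2 *\<^sub>R y))\<^sup>2 / 2) powr (2 * b)) \<partial>(lborel::'a measure))"
    by (intro nn_integral_lborel_scale) auto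
  also have "(\<lambda>y::'a. ennreal (max 0 (1 - (norm (sqrt 2 *\<^sub>R y))\<^sup>2 / 2) powr (2 * b))) =
      (\<lambda>y. ennreal (max 0 (1 - (norm y)\<^sup>2) powr (2 * b)))"
    by (simp add: power_mult_distrib)
  finally show ?thesis .
qed

definition sqnorm :: "nat set \<Rightarrow> (nat \<Rightarrow> 'a::real_normed_vector) \<Rightarrow> real" where
  "sqnorm I x = (\<Sum>j\<in>I. (norm (x j))\<^sup>2)"

definition sqball :: "nat set \<Rightarrow> real \<Rightarrow> (nat \<Rightarrow> 'a::euclidean_space) set" where
  "sqball I r = {x \<in> space (PiM I (\<lambda>_. lborel::'a measure)). sqnorm I x \<le> r}"

lemma sqnorm_nonneg: "sqnorm I x \<ge> 0"
  unfolding sqnorm_def by (intro sum_nonneg) auto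

lemma norm_le_sqrt_sqnorm: "finite I \<Longrightarrow> i \<in> I \<Longrightarrow> norm (x i) \<le> sqrt (sqnorm I x)"
  unfolding sqnorm_def by (intro real_le_rsqrt member_le_sum) auto

lemma sqnorm_measurable[measurable]:
  "finite I \<Longrightarrow> sqnorm I \<in> borel_measurable (PiM I (\<lambda>_. lborel::'a::euclidean_space measure))"
  unfolding sqnorm_def[abs_def] by measurable

lemma sqball_sets[measurable]:
  "finite I \<Longrightarrow> sqball I r \<in> sets (PiM I (\<lambda>_. lborel::'a::euclidean_space measure))"
  unfolding sqball_def by measurable

lemma emeasure_sqball_scale:
  assumes I: "finite I" and r: "r > 0"
  shows "emeasure (PiM I (\<lambda>_. lborel)) (sqball I r :: (nat \<Rightarrow> 'a::euclidean_space) set) =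
     ennreal (sqrt r ^ (DIM('a) * card I)) * emeasure (PiM I (\<lambda>_. lborel)) (sqball I 1 :: (nat \<Rightarrow> 'a) set)"
proof -
  let ?M = "PiM I (\<lambda>_. lborel::'a measure)"
  have "emeasure ?M (sqball I r) = (\<integral>\<^sup>+x. indicator (sqball I r) x \<partial>?M)"
    using I by simp
  also have "\<dots> = ennreal (sqrt r ^ (DIM('a) * card I)) *
      (\<integral>\<^sup>+x. indicator (sqball I r) (restrict (\<lambda>j. sqrt r *\<^sub>R x j) I) \<partial>?M)"
    using I r by (intro nn_integral_PiM_lborel_scale) auto
  also have "(\<integral>\<^sup>+x. indicator (sqball I r) (restrict (\<lambda>j. sqrt r *\<^sub>R x j) I) \<partial>?M) =
      (\<integral>\<^sup>+x. indicator (sqball I 1) x \<partial>?M)"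
  proof (intro nn_integral_cong)
    fix x assume "x \<in> space ?M"
    moreover have "sqnorm I (restrict (\<lambda>j. sqrt r *\<^sub>R x j) I) = r * sqnorm I x"
      using r by (simp add: sqnorm_def sum_distrib_left power_mult_distrib)
    ultimately show "indicator (sqball I r) (restrict (\<lambda>j. sqrt r *\<^sub>R x j) I) = (indicator (sqball I 1) x :: ennreal)"
      using r by (simp add: sqball_def indicator_def space_PiM)
  qed
  finally show ?thesis
    using I by simp
qed

lemma emeasure_sqball_finite:
  assumes I: "finite I"
  shows "emeasure (PiM I (\<lambda>_. lborel)) (sqball I r :: (nat \<Rightarrow> 'a::euclidean_space) set) < \<infinity>"
proof -
  interpret product_sigma_finite "\<lambda>_. lborel::'a measure" by standard
  let ?C = "cball (0::'a) (sqrt (max 0 r))"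
  have "sqball I r \<subseteq> Pi\<^sub>E I (\<lambda>_. ?C)"
  proof
    fix x :: "nat \<Rightarrow> 'a" assume "x \<in> sqball I r"
    then have "x \<in> space (PiM I (\<lambda>_. lborel::'a measure))" and "sqnorm I x \<le> max 0 r"
      by (auto simp: sqball_def)
    moreover have "norm (x i) \<le> sqrt (max 0 r)" if "i \<in> I" for i
      using norm_le_sqrt_sqnorm[OF I that, of x] real_sqrt_le_mono[OF \<open>sqnorm I x \<le> max 0 r\<close>]
      by linarith
    ultimately show "x \<in> Pi\<^sub>E I (\<lambda>_. ?C)"
      by (auto simp: space_PiM PiE_def)
  qed
  then have "emeasure (PiM I (\<lambda>_. lborel)) (sqball I r :: (nat \<Rightarrow> 'a) set) \<le> emeasure (PiM I (\<lambda>_. lborel)) (Pi\<^sub>E I (\<lambda>_. ?C))"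
    by (rule Measure_Space.emeasure_mono) (auto intro!: sets_PiM_I_finite simp: I)
  also have "\<dots> = (\<Prod>i\<in>I. emeasure lborel ?C)"
    using I by (simp add: emeasure_PiM)
  also have "\<dots> < \<infinity>"
    using emeasure_lborel_cball_finite[of "0::'a"] by (simp add: power_less_top_ennreal)
  finally show ?thesis .
qed

lemma emeasure_sqball_pos:
  assumes I: "finite I" "I \<noteq> {}"
  shows "emeasure (PiM I (\<lambda>_. lborel)) (sqball I 1 :: (nat \<Rightarrow> 'a::euclidean_space) set) > 0"
proof -
  interpret product_sigma_finite "\<lambda>_. lborel::'a measure" by standard
  define \<rho> where "\<rho> = 1 / sqrt (card I)"
  have \<rho>: "\<rho> > 0"
    using I by (simp add: \<rho>_def card_gt_0_iff)
  have "Pi\<^sub>E I (\<lambda>_. ball (0::'a) \<rho>) \<subseteq> sqball I 1"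
  proof
    fix x assume x: "x \<in> Pi\<^sub>E I (\<lambda>_. ball (0::'a) \<rho>)"
    have "sqnorm I x \<le> (\<Sum>j\<in>I. \<rho>\<^sup>2)"
      unfolding sqnorm_def using x by (intro sum_mono power_mono) (auto simp: PiE_def Pi_iff less_imp_le)
    also have "\<dots> = 1"
      using I by (simp add: \<rho>_def power_divide card_gt_0_iff)
    finally show "x \<in> sqball I 1"
      using x by (auto simp: sqball_def space_PiM PiE_def)
  qed
  then have "emeasure (PiM I (\<lambda>_. lborel)) (Pi\<^sub>E I (\<lambda>_. ball (0::'a) \<rho>)) \<le> emeasure (PiM I (\<lambda>_. lborel)) (sqball I 1 :: (nat \<Rightarrow> 'a) set)"
    by (rule Measure_Space.emeasure_mono) (simp add: I)
  moreover have "emeasure (PiM I (\<lambda>_. lborel)) (Pi\<^sub>E I (\<lambda>_. ball (0::'a) \<rho>)) = (\<Prod>i\<in>I. emeasure lborel (ball (0::'a) \<rho>))"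
    using I by (simp add: emeasure_PiM)
  moreover have "(\<Prod>i\<in>I. emeasure lborel (ball (0::'a) \<rho>)) > 0"
    using \<rho> by (simp add: emeasure_ball ennreal_power)
  ultimately show ?thesis
    by simp
qed

lemma emeasure_sqball_zero:
  assumes I: "finite I" "I \<noteq> {}"
  shows "emeasure (PiM I (\<lambda>_. lborel)) (sqball I 0 :: (nat \<Rightarrow> 'a::euclidean_space) set) = 0"
proof -
  interpret product_sigma_finite "\<lambda>_. lborel::'a measure" by standard
  have "sqball I 0 = Pi\<^sub>E I (\<lambda>_. {0::'a})"
  proof (intro set_eqI iffI)
    fix x :: "nat \<Rightarrow> 'a" assume "x \<in> sqball I 0"
    then have "x \<in> space (PiM I (\<lambda>_. lborel::'a measure))" and "sqnorm I x \<le> 0"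
      by (auto simp: sqball_def)
    moreover have "x i = 0" if "i \<in> I" for i
      using norm_le_sqrt_sqnorm[OF I(1) that, of x] \<open>sqnorm I x \<le> 0\<close> sqnorm_nonneg[of I x] by simp
    ultimately show "x \<in> Pi\<^sub>E I (\<lambda>_. {0::'a})"
      by (auto simp: space_PiM PiE_iff extensional_def)
  next
    fix x assume "x \<in> Pi\<^sub>E I (\<lambda>_. {0::'a})"
    then show "x \<in> sqball I 0"
      by (auto simp: sqball_def sqnorm_def space_PiM PiE_def)
  qed
  moreover have "emeasure (PiM I (\<lambda>_. lborel)) (Pi\<^sub>E I (\<lambda>_. {0::'a})) = (\<Prod>i\<in>I. emeasure lborel {0::'a})"
    using I by (intro emeasure_PiM) auto
  ultimately show ?thesis
    using I by (simp add: card_gt_0_iff)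
qed

lemma emeasure_sqball:
  assumes I: "finite I" "I \<noteq> {}"
  shows "emeasure (PiM I (\<lambda>_. lborel)) (sqball I s :: (nat \<Rightarrow> 'a::euclidean_space) set) =
     ennreal (max 0 s powr (DIM('a) * card I / 2)) * emeasure (PiM I (\<lambda>_. lborel)) (sqball I 1 :: (nat \<Rightarrow> 'a) set)"
proof -
  consider "s > 0" | "s = 0" | "s < 0"
    by linarith
  then show ?thesis
  proof cases
    case 1
    have "sqrt s ^ (DIM('a) * card I) = s powr (DIM('a) * card I / 2)"
      using 1 by (simp add: sqrt_def root_powr_inverse powr_realpow[symmetric] powr_powr)
    then show ?thesis
      using emeasure_sqball_scale[OF I(1) 1, where 'a='a] 1 by simp
  next
    case 2
    then show ?thesis
      using emeasure_sqball_zero[OF I] by simp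
  next
    case 3
    then have "sqball I s = ({} :: (nat \<Rightarrow> 'a) set)"
      by (auto simp: sqball_def dest: order_trans[OF sqnorm_nonneg])
    then show ?thesis
      using 3 by simp
  qed
qed

lemma nn_integral_sqball_insert:
  fixes h :: "'a::euclidean_space \<Rightarrow> ennreal"
  assumes J: "finite J" "i \<notin> J" and h[measurable]: "h \<in> borel_measurable borel"
  shows "(\<integral>\<^sup>+x. h (x i) * indicator (sqball (insert i J) 1) x \<partial>PiM (insert i J) (\<lambda>_. lborel::'a measure)) =
     (\<integral>\<^sup>+y. h y * emeasure (PiM J (\<lambda>_. lborel::'a measure)) (sqball J (1 - (norm y)\<^sup>2)) \<partial>lborel)"
proof -
  interpret product_sigma_finite "\<lambda>_. lborel::'a measure" by standard
  have [measurable]: "sqball (insert i J) 1 \<in> sets (PiM (insert i J) (\<lambda>_. lborel::'a measure))"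
    using J by simp
  have split: "indicator (sqball (insert i J) 1) (x(i := y)) = (indicator (sqball J (1 - (norm y)\<^sup>2)) x :: ennreal)"
    if "x \<in> space (PiM J (\<lambda>_. lborel::'a measure))" for x y
  proof -
    have "sqnorm (insert i J) (x(i := y)) = (norm y)\<^sup>2 + sqnorm J x"
      using J unfolding sqnorm_def by (simp, intro sum.cong) auto
    then show ?thesis
      using that J by (auto simp: sqball_def indicator_def space_PiM PiE_iff extensional_def)
  qed
  have "(\<integral>\<^sup>+x. h (x i) * indicator (sqball (insert i J) 1) x \<partial>PiM (insert i J) (\<lambda>_. lborel::'a measure)) =
      (\<integral>\<^sup>+y. (\<integral>\<^sup>+x. h y * indicator (sqball (insert i J) 1) (x(i := y)) \<partial>PiM J (\<lambda>_. lborel::'a measure)) \<partial>lborel)"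
    using J by (subst product_nn_integral_insert_rev) auto
  also have "\<dots> = (\<integral>\<^sup>+y. (\<integral>\<^sup>+x. h y * indicator (sqball J (1 - (norm y)\<^sup>2)) x \<partial>PiM J (\<lambda>_. lborel::'a measure)) \<partial>lborel)"
    by (intro nn_integral_cong) (simp add: split)
  also have "\<dots> = (\<integral>\<^sup>+y. h y * emeasure (PiM J (\<lambda>_. lborel::'a measure)) (sqball J (1 - (norm y)\<^sup>2)) \<partial>lborel)"
    using J by (intro nn_integral_cong nn_integral_cmult_indicator) auto
  finally show ?thesis .
qed

section \<open>Moments of a coordinate on the ball\<close>

lemma nn_integral_sqball_coordinate:
  fixes h :: "'a::euclidean_space \<Rightarrow> ennreal"
  assumes I: "finite I" "card I \<ge> 2" and i: "i \<in> I" and h[measurable]: "h \<in> borel_measurable borel"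
  shows "(\<integral>\<^sup>+x. h (x i) * indicator (sqball I 1) x \<partial>PiM I (\<lambda>_. lborel::'a measure)) =
    (\<integral>\<^sup>+y. h y * ennreal (max 0 (1 - (norm y)\<^sup>2) powr (DIM('a) * card (I - {i}) / 2)) \<partial>lborel) *
      emeasure (PiM (I - {i}) (\<lambda>_. lborel::'a measure)) (sqball (I - {i}) 1)"
proof -
  define J where "J = I - {i}"
  have IJ: "I = insert i J" and J: "finite J" "i \<notin> J" "card J = card I - 1"
    using I i by (auto simp: J_def)
  then have "J \<noteq> {}"
    using I(2) by auto
  have "emeasure (PiM J (\<lambda>_. lborel::'a measure)) (sqball J (1 - (norm y)\<^sup>2)) =
      ennreal (max 0 (1 - (norm y)\<^sup>2) powr (DIM('a) * card J / 2)) *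
        emeasure (PiM J (\<lambda>_. lborel::'a measure)) (sqball J 1)"
    for y :: 'a
    by (rule emeasure_sqball[OF J(1) \<open>J \<noteq> {}\<close>])
  then show ?thesis
    unfolding IJ nn_integral_sqball_insert[OF J(1,2) h] by (simp add: J_def nn_integral_multc flip: mult.assoc)
qed

(* On the ball the i-th coordinate has density proportional to (1 - |y|^2)^(m/2): half of this weight
   absorbs |y|^q, and the other half is compared with the full weight by the substitution y |-> sqrt 2 y. *)
lemma nn_integral_sqball_norm_powr_le:
  fixes q :: real
  assumes I: "finite I" "card I \<ge> 2" and i: "i \<in> I" and q: "q > 0"
  shows "(\<integral>\<^sup>+x. ennreal (norm (x i) powr q) * indicator (sqball I 1) x \<partial>PiM I (\<lambda>_. lborel::'a::euclidean_space measure))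
     \<le> ennreal (sqrt 2 ^ DIM('a) * (4 * q / card I) powr (q / 2)) * emeasure (PiM I (\<lambda>_. lborel::'a measure)) (sqball I 1)"
proof -
  define m where "m = real (DIM('a) * card (I - {i}))"
  have m: "card I / 2 \<le> m"
  proof -
    have "card I / 2 \<le> real (card (I - {i}))"
      using I i by (simp add: of_nat_diff)
    also have "\<dots> \<le> m"
      unfolding m_def of_nat_le_iff using DIM_positive[where 'a='a] by simp
    finally show ?thesis .
  qed
  then have "m > 0"
    using I(2) by linarith
  define D where "D a = (\<integral>\<^sup>+y. ennreal (max 0 (1 - (norm y)\<^sup>2) powr a) \<partial>(lborel::'a measure))" for a
  define VJ where "VJ = emeasure (PiM (I - {i}) (\<lambda>_. lborel::'a measure)) (sqball (I - {i}) 1)"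
  note coordinate = nn_integral_sqball_coordinate[OF I i, where 'a='a, folded m_def VJ_def]
  have ball: "emeasure (PiM I (\<lambda>_. lborel::'a measure)) (sqball I 1) = D (m / 2) * VJ"
    using coordinate[of "\<lambda>_. 1"] I by (simp add: D_def)
  have "(\<integral>\<^sup>+x. ennreal (norm (x i) powr q) * indicator (sqball I 1) x \<partial>PiM I (\<lambda>_. lborel::'a measure)) =
      (\<integral>\<^sup>+y. ennreal (norm y powr q * max 0 (1 - (norm y)\<^sup>2) powr (m / 2)) \<partial>(lborel::'a measure)) * VJ"
    using coordinate[of "\<lambda>y. ennreal (norm y powr q)"] by (simp add: ennreal_mult)
  also have "\<dots> \<le> (\<integral>\<^sup>+y. ennreal ((2 * q / m) powr (q / 2)) * ennreal (max 0 (1 - (norm y)\<^sup>2) powr (m / 4)) \<partial>(lborel::'a measure)) * VJ"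
    using q \<open>m > 0\<close>
    by (intro mult_right_mono nn_integral_mono) (simp_all add: powr_mult_one_minus_sq_powr_le flip: ennreal_mult)
  also have "\<dots> = ennreal ((2 * q / m) powr (q / 2)) * D (m / 4) * VJ"
    by (simp add: D_def nn_integral_cmult)
  also have "\<dots> \<le> ennreal ((2 * q / m) powr (q / 2)) * (ennreal (sqrt 2 ^ DIM('a)) * D (m / 2)) * VJ"
    using nn_integral_one_minus_sq_powr_le[of "m / 4", where 'a='a] \<open>m > 0\<close>
    by (intro mult_right_mono mult_left_mono) (simp_all add: D_def)
  also have "\<dots> = ennreal (sqrt 2 ^ DIM('a) * (2 * q / m) powr (q / 2)) * emeasure (PiM I (\<lambda>_. lborel::'a measure)) (sqball I 1)"
    by (simp add: ball ennreal_mult mult_ac)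
  also have "\<dots> \<le> ennreal (sqrt 2 ^ DIM('a) * (4 * q / card I) powr (q / 2)) * emeasure (PiM I (\<lambda>_. lborel::'a measure)) (sqball I 1)"
    using q m I(2) \<open>m > 0\<close>
    by (intro mult_right_mono ennreal_leI mult_left_mono powr_mono2) (auto simp: field_simps)
  finally show ?thesis .
qed

(* Outside the ball of radius 1/2 the normalisation costs at most a factor 2^q; the inner ball only
   contributes its exponentially small volume. *)
lemma normalized_norm_powr_le:
  fixes x :: "nat \<Rightarrow> 'a::euclidean_space"
  assumes I: "finite I" and i: "i \<in> I" and q: "q > 0" and x: "x \<in> space (PiM I (\<lambda>_. lborel::'a measure))"
  shows "ennreal ((norm (x i) / sqrt (sqnorm I x)) powr q) * indicator (sqball I 1) x
    \<le> ennreal (2 powr q) * (ennreal (norm (x i) powr q) * indicator (sqball I 1) x) + indicator (sqball I (1 / 4)) x"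
proof (cases "sqnorm I x \<le> 1 / 4")
  case True
  have ratio: "norm (x i) / sqrt (sqnorm I x) \<le> 1"
    using norm_le_sqrt_sqnorm[OF I(1) i, of x] sqnorm_nonneg[of I x]
    by (cases "sqnorm I x = 0") (auto simp: divide_le_eq_1)
  then have "(norm (x i) / sqrt (sqnorm I x)) powr q \<le> 1"
    using powr_mono2[OF _ _ ratio, of q] q sqnorm_nonneg[of I x] by simp
  moreover have "x \<in> sqball I (1 / 4)"
    using True x by (simp add: sqball_def)
  ultimately show ?thesis
    by (simp add: indicator_def add_increasing)
next
  case False
  then have half: "1 / 2 \<le> sqrt (sqnorm I x)"
    by (intro real_le_rsqrt) (simp add: power2_eq_square)
  then have "(1 / 2) powr q \<le> sqrt (sqnorm I x) powr q"
    using q by (intro powr_mono2) auto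
  then have "(norm (x i) / sqrt (sqnorm I x)) powr q \<le> norm (x i) powr q / (1 / 2) powr q"
    unfolding powr_divide
    using half by (intro divide_left_mono) (auto intro!: divide_pos_pos)
  also have "\<dots> = 2 powr q * norm (x i) powr q"
    by (simp add: powr_divide)
  finally show ?thesis
    by (simp add: indicator_def add_increasing2 ennreal_leI flip: ennreal_mult)
qed

lemma nn_integral_sqball_normalized_powr_le:
  fixes q :: real
  assumes I: "finite I" "card I \<ge> 2" and i: "i \<in> I" and q: "q > 0"
  defines "M \<equiv> PiM I (\<lambda>_. lborel::'a::euclidean_space measure)"
  shows "(\<integral>\<^sup>+x. ennreal ((norm (x i) / sqrt (sqnorm I x)) powr q) * indicator (sqball I 1) x \<partial>M)
     \<le> ennreal ((sqrt 2 ^ DIM('a) + 1) * (16 * q / card I) powr (q / 2)) * emeasure M (sqball I 1)"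
proof -
  have "I \<noteq> {}"
    using I(2) by auto
  have "(\<integral>\<^sup>+x. ennreal ((norm (x i) / sqrt (sqnorm I x)) powr q) * indicator (sqball I 1) x \<partial>M)
      \<le> (\<integral>\<^sup>+x. ennreal (2 powr q) * (ennreal (norm (x i) powr q) * indicator (sqball I 1) x)
          + indicator (sqball I (1 / 4)) x \<partial>M)"
    by (intro nn_integral_mono normalized_norm_powr_le I i q) (simp add: M_def)
  also have "\<dots> = ennreal (2 powr q) * (\<integral>\<^sup>+x. ennreal (norm (x i) powr q) * indicator (sqball I 1) x \<partial>M)
      + emeasure M (sqball I (1 / 4))"
    using I i by (simp add: M_def nn_integral_add nn_integral_cmult)
  also have "\<dots> \<le> ennreal (2 powr q) * (ennreal (sqrt 2 ^ DIM('a) * (4 * q / card I) powr (q / 2)) * emeasure M (sqball I 1))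
        + ennreal ((1 / 4) powr (DIM('a) * card I / 2)) * emeasure M (sqball I 1)"
    using nn_integral_sqball_norm_powr_le[OF I i q, where 'a='a] emeasure_sqball[OF I(1) \<open>I \<noteq> {}\<close>, of "1 / 4", where 'a='a]
    by (intro add_mono mult_left_mono) (auto simp: M_def)
  also have "\<dots> = ennreal (sqrt 2 ^ DIM('a) * (16 * q / card I) powr (q / 2) + (1 / 4) powr (DIM('a) * card I / 2))
        * emeasure M (sqball I 1)"
  proof -
    have "(4::real) powr (q / 2) = (2 powr 2) powr (q / 2)"
      by simp
    also have "\<dots> = 2 powr q"
      by (simp add: powr_powr)
    finally have "(16 * q / card I) powr (q / 2) = 2 powr q * (4 * q / card I) powr (q / 2)"
      using q powr_mult[of 4 "4 * q / card I" "q / 2"] by simp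
    then show ?thesis
      by (simp add: ennreal_plus distrib_left ennreal_mult mult_ac)
  qed
  also have "\<dots> \<le> ennreal ((sqrt 2 ^ DIM('a) + 1) * (16 * q / card I) powr (q / 2)) * emeasure M (sqball I 1)"
    using quarter_powr_le[OF q, of "card I" "DIM('a)"] I(2) DIM_positive[where 'a='a]
    by (intro mult_right_mono ennreal_leI) (auto simp: distrib_right)
  finally show ?thesis .
qed

section \<open>The cone measure\<close>

definition sphere_proj :: "nat \<Rightarrow> (nat \<Rightarrow> 'a::real_normed_vector) \<Rightarrow> (nat \<Rightarrow> 'a)" where
  "sphere_proj d x = restrict (\<lambda>i. x i /\<^sub>R l2norm d x) {..<d}"

definition cone_measure :: "'a itself \<Rightarrow> nat \<Rightarrow> (nat \<Rightarrow> 'a::euclidean_space) measure" where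
  "cone_measure K d =
     distr (uniform_measure (Kd_measure K d) (unit_ball_d K d)) (Kd_measure K d) (sphere_proj d)"

lemma l2norm_eq_sqrt_sqnorm: "l2norm d x = sqrt (sqnorm {..<d} x)"
  by (simp add: l2norm_def sqnorm_def)

lemma unit_ball_d_eq_sqball: "unit_ball_d TYPE('a::euclidean_space) d = (sqball {..<d} 1 :: (nat \<Rightarrow> 'a) set)"
  by (auto simp: unit_ball_d_def sqball_def Kd_measure_def l2norm_eq_sqrt_sqnorm)

lemma sphere_proj_measurable[measurable]:
  "sphere_proj d \<in> PiM {..<d} (\<lambda>_. lborel::'a::euclidean_space measure) \<rightarrow>\<^sub>M PiM {..<d} (\<lambda>_. lborel)"
  unfolding sphere_proj_def l2norm_def by measurable

lemma sqnorm_sphere_proj: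
  assumes "sqnorm {..<d} x \<noteq> 0"
  shows "sqnorm {..<d} (sphere_proj d x) = 1"
proof -
  have "sqnorm {..<d} x > 0"
    using assms sqnorm_nonneg[of "{..<d}" x] by simp
  have "(norm (sphere_proj d x i))\<^sup>2 = (norm (x i))\<^sup>2 / sqnorm {..<d} x" if "i < d" for i
    using that \<open>sqnorm {..<d} x > 0\<close>
    by (simp add: sphere_proj_def l2norm_eq_sqrt_sqnorm power_mult_distrib power_inverse divide_inverse)
  then show ?thesis
    using \<open>sqnorm {..<d} x > 0\<close> by (simp add: sqnorm_def flip: sum_divide_distrib)
qed

lemma norm_sphere_proj: "i < d \<Longrightarrow> norm (sphere_proj d x i) = norm (x i) / sqrt (sqnorm {..<d} x)"
  by (simp add: sphere_proj_def l2norm_eq_sqrt_sqnorm sqnorm_nonneg divide_inverse mult.commute)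

lemma sets_cone_measure[measurable_cong]: "sets (cone_measure K d) = sets (Kd_measure K d)"
  by (simp add: cone_measure_def)

context
  fixes d :: nat
  assumes d: "d \<ge> 1"
begin

lemma emeasure_unit_ball_d:
  "0 < emeasure (Kd_measure TYPE('a::euclidean_space) d) (unit_ball_d TYPE('a) d)"
  "emeasure (Kd_measure TYPE('a::euclidean_space) d) (unit_ball_d TYPE('a) d) < \<infinity>"
  using emeasure_sqball_pos[of "{..<d}", where 'a='a] emeasure_sqball_finite[of "{..<d}" 1, where 'a='a] d
  by (auto simp: unit_ball_d_eq_sqball Kd_measure_def lessThan_empty_iff)

lemma prob_space_cone_measure: "prob_space (cone_measure TYPE('a::euclidean_space) d)"
  unfolding cone_measure_def using emeasure_unit_ball_d[where 'a='a]
  by (intro prob_space.prob_space_distr prob_space_uniform_measure) (auto simp: Kd_measure_def)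

lemma AE_cone_measure_sphere: "AE z in cone_measure TYPE('a::euclidean_space) d. sqnorm {..<d} z = 1"
proof -
  have "{..<d} \<noteq> {}"
    using d by (auto simp: lessThan_empty_iff)
  then have "(sqball {..<d} 0 :: (nat \<Rightarrow> 'a) set) \<in> null_sets (Kd_measure TYPE('a) d)"
    by (simp add: Kd_measure_def null_sets_def emeasure_sqball_zero)
  then have "AE x in Kd_measure TYPE('a) d. sqnorm {..<d} x \<noteq> 0"
    by (rule AE_I') (auto simp: Kd_measure_def sqball_def)
  then show ?thesis
    unfolding cone_measure_def
    by (subst AE_distr_iff)
      (auto simp: Kd_measure_def unit_ball_d_eq_sqball sqball_sets intro!: AE_uniform_measureI sqnorm_sphere_proj)
qed

lemma integrable_cone_measure:
  fixes f :: "(nat \<Rightarrow> 'a::euclidean_space) \<Rightarrow> real"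
  assumes f: "f \<in> borel_measurable (Kd_measure TYPE('a) d)"
    and bound: "\<And>z. sqnorm {..<d} z = 1 \<Longrightarrow> \<bar>f z\<bar> \<le> C"
  shows "integrable (cone_measure TYPE('a) d) f"
proof -
  interpret prob_space "cone_measure TYPE('a) d"
    by (rule prob_space_cone_measure)
  show ?thesis
    using AE_cone_measure_sphere f by (intro integrable_const_bound[where B=C]) (auto elim!: eventually_mono bound)
qed

lemma nn_integral_cone_measure:
  assumes f[measurable]: "f \<in> borel_measurable (Kd_measure TYPE('a::euclidean_space) d)"
  shows "(\<integral>\<^sup>+z. f z \<partial>cone_measure TYPE('a) d) =
    (\<integral>\<^sup>+x. f (sphere_proj d x) * indicator (unit_ball_d TYPE('a) d) x \<partial>Kd_measure TYPE('a) d) /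
      emeasure (Kd_measure TYPE('a) d) (unit_ball_d TYPE('a) d)"
proof -
  have [measurable]: "f \<in> borel_measurable (PiM {..<d} (\<lambda>_. lborel))"
    using f by (simp add: Kd_measure_def)
  show ?thesis
    unfolding cone_measure_def
    by (simp add: nn_integral_distr nn_integral_uniform_measure Kd_measure_def unit_ball_d_eq_sqball)
qed

lemma sphere_integral_eq_integral:
  assumes f: "f \<in> borel_measurable (Kd_measure TYPE('a::euclidean_space) d)"
  shows "sphere_integral TYPE('a) d f = (\<integral>z. f z \<partial>cone_measure TYPE('a) d)"
proof -
  let ?M = "PiM {..<d} (\<lambda>_. lborel::'a measure)" and ?B = "sqball {..<d} 1 :: (nat \<Rightarrow> 'a) set"
  have [measurable]: "f \<in> borel_measurable ?M"
    using f by (simp add: Kd_measure_def)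
  have "uniform_measure ?M ?B = density ?M (\<lambda>x. ennreal (indicator ?B x / measure ?M ?B))"
    using emeasure_unit_ball_d[where 'a='a] unfolding uniform_measure_def
    by (intro arg_cong2[where f=density] ext refl)
      (simp add: emeasure_eq_ennreal_measure divide_ennreal[of 1, simplified] Kd_measure_def
        unit_ball_d_eq_sqball split: split_indicator)
  then have "(\<integral>z. f z \<partial>cone_measure TYPE('a) d) = (\<integral>x. indicator ?B x / measure ?M ?B * f (sphere_proj d x) \<partial>?M)"
    unfolding cone_measure_def Kd_measure_def unit_ball_d_eq_sqball by (simp add: integral_distr integral_density)
  also have "\<dots> = sphere_integral TYPE('a) d f"
    by (simp add: sphere_integral_def sphere_proj_def Kd_measure_def unit_ball_d_eq_sqball
        mult.commute[of _ "f _"] flip: integral_divide_zero)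
  finally show ?thesis ..
qed

lemma integral_cone_measure_mono:
  fixes f g :: "(nat \<Rightarrow> 'a::euclidean_space) \<Rightarrow> real"
  assumes "integrable (cone_measure TYPE('a) d) f" "integrable (cone_measure TYPE('a) d) g"
    and "\<And>z. sqnorm {..<d} z = 1 \<Longrightarrow> f z \<le> g z"
  shows "(\<integral>z. f z \<partial>cone_measure TYPE('a) d) \<le> (\<integral>z. g z \<partial>cone_measure TYPE('a) d)"
  using AE_cone_measure_sphere[where 'a='a] assms by (intro integral_mono_AE) (auto elim!: eventually_mono)

lemma integral_cone_measure_le_const:
  fixes f :: "(nat \<Rightarrow> 'a::euclidean_space) \<Rightarrow> real"
  assumes "integrable (cone_measure TYPE('a) d) f" and "\<And>z. sqnorm {..<d} z = 1 \<Longrightarrow> f z \<le> c"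
  shows "(\<integral>z. f z \<partial>cone_measure TYPE('a) d) \<le> c"
proof -
  interpret prob_space "cone_measure TYPE('a) d"
    by (rule prob_space_cone_measure)
  show ?thesis
    using integral_cone_measure_mono[OF assms(1) integrable_const assms(2)] by (simp add: prob_space)
qed

lemma integral_cone_measure_ge_const:
  fixes f :: "(nat \<Rightarrow> 'a::euclidean_space) \<Rightarrow> real"
  assumes "integrable (cone_measure TYPE('a) d) f" and "\<And>z. sqnorm {..<d} z = 1 \<Longrightarrow> c \<le> f z"
  shows "c \<le> (\<integral>z. f z \<partial>cone_measure TYPE('a) d)"
proof -
  interpret prob_space "cone_measure TYPE('a) d"
    by (rule prob_space_cone_measure)
  show ?thesis
    using integral_cone_measure_mono[OF integrable_const assms(1) assms(2)] by (simp add: prob_space)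
qed

end

section \<open>Norms on the unit sphere\<close>

lemma norm_le_infnorm_d: "i < d \<Longrightarrow> norm (z i) \<le> infnorm_d d z"
  unfolding infnorm_d_def by (intro Max_ge) auto

lemma infnorm_d_nonneg: "0 \<le> infnorm_d d z"
  unfolding infnorm_d_def by (intro Max_ge) auto

lemma infnorm_d_attained:
  assumes "d \<ge> 1"
  shows "\<exists>i<d. infnorm_d d z = norm (z i)"
proof -
  have "infnorm_d d z \<in> insert 0 ((\<lambda>i. norm (z i)) ` {..<d})"
    unfolding infnorm_d_def by (intro Max_in) auto
  moreover have "norm (z 0) \<le> infnorm_d d z"
    using assms by (intro norm_le_infnorm_d) auto
  moreover have "0 \<le> norm (z 0)"
    by simp
  ultimately show ?thesis
    using assms by (auto intro: exI[of _ 0])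
qed

lemma sum_norm_powr_measurable[measurable]:
  "(\<lambda>z. \<Sum>i<d. norm (z i) powr q) \<in> borel_measurable (Kd_measure TYPE('a::euclidean_space) d)"
  unfolding Kd_measure_def by measurable

lemma pnorm_measurable[measurable]:
  "pnorm d p \<in> borel_measurable (Kd_measure TYPE('a::euclidean_space) d)"
  unfolding pnorm_def[abs_def] Kd_measure_def by measurable

lemma infnorm_d_measurable[measurable]:
  "infnorm_d d \<in> borel_measurable (Kd_measure TYPE('a::euclidean_space) d)"
proof (cases "d = 0")
  case False
  then have "infnorm_d d = (\<lambda>z::nat \<Rightarrow> 'a. max 0 (Max ((\<lambda>i. norm (z i)) ` {..<d})))"
    by (auto simp: infnorm_d_def fun_eq_iff Max_insert lessThan_empty_iff)
  moreover have "(\<lambda>z. Max ((\<lambda>i. norm (z i)) ` {..<d})) \<in> borel_measurable (Kd_measure TYPE('a) d)"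
    unfolding Kd_measure_def
    by (intro borel_measurable_Max borel_measurable_norm measurable_component_singleton) auto
  ultimately show ?thesis
    by (simp add: borel_measurable_max)
qed (simp add: infnorm_d_def[abs_def])

context
  fixes d :: nat and z :: "nat \<Rightarrow> 'a::real_normed_vector"
  assumes sphere: "sqnorm {..<d} z = 1"
begin

lemma sphere_dim_ge_one: "d \<ge> 1"
  using sphere by (cases "d = 0") (auto simp: sqnorm_def)

lemma sphere_indices_nonempty: "{..<d} \<noteq> {}"
  using sphere_dim_ge_one by (auto simp: lessThan_empty_iff)

lemma sphere_norm_le_one: "i < d \<Longrightarrow> norm (z i) \<le> 1"
  using norm_le_sqrt_sqnorm[of "{..<d}" i z] sphere by simp

lemma sphere_infnorm_d_bounds: "infnorm_d d z \<le> 1" "1 \<le> d * (infnorm_d d z)\<^sup>2"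
proof -
  obtain j where "j < d" "infnorm_d d z = norm (z j)"
    using infnorm_d_attained sphere_dim_ge_one by blast
  then show "infnorm_d d z \<le> 1"
    using sphere_norm_le_one by simp
  have "1 = (\<Sum>i<d. (norm (z i))\<^sup>2)"
    using sphere by (simp add: sqnorm_def)
  also have "\<dots> \<le> (\<Sum>i<d. (infnorm_d d z)\<^sup>2)"
    by (intro sum_mono power_mono norm_le_infnorm_d) auto
  finally show "1 \<le> d * (infnorm_d d z)\<^sup>2"
    by simp
qed

lemma sphere_infnorm_d_pos: "infnorm_d d z > 0"
  using sphere_infnorm_d_bounds(2) infnorm_d_nonneg[of d z] by (cases "infnorm_d d z = 0") auto

lemma sphere_ln_inv_infnorm_d_bounds: "0 \<le> ln (1 / infnorm_d d z)" "ln (1 / infnorm_d d z) \<le> ln d / 2"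
proof -
  show "0 \<le> ln (1 / infnorm_d d z)"
    using sphere_infnorm_d_bounds(1) sphere_infnorm_d_pos by simp
  have "0 \<le> ln (d * (infnorm_d d z)\<^sup>2)"
    using sphere_infnorm_d_bounds(2) by simp
  then show "ln (1 / infnorm_d d z) \<le> ln d / 2"
    using sphere_infnorm_d_pos sphere_dim_ge_one by (simp add: ln_mult ln_realpow ln_div)
qed

lemma sphere_infnorm_d_powr_le_sum: "infnorm_d d z powr q \<le> (\<Sum>i<d. norm (z i) powr q)"
proof -
  obtain i where "i < d" "infnorm_d d z = norm (z i)"
    using infnorm_d_attained[OF sphere_dim_ge_one] by blast
  moreover have "norm (z i) powr q \<le> (\<Sum>i<d. norm (z i) powr q)"
    using \<open>i < d\<close> by (intro member_le_sum) auto
  ultimately show ?thesis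
    by simp
qed

lemma sphere_sum_norm_powr_pos: "0 < (\<Sum>i<d. norm (z i) powr q)"
proof -
  have "0 < infnorm_d d z powr q"
    using sphere_infnorm_d_pos by simp
  then show ?thesis
    using sphere_infnorm_d_powr_le_sum[of q] by linarith
qed

lemma sphere_sum_norm_powr_le: "q > 0 \<Longrightarrow> (\<Sum>i<d. norm (z i) powr q) \<le> d"
  using sum_mono[of "{..<d}" "\<lambda>i. norm (z i) powr q" "\<lambda>_. 1"] sphere_norm_le_one by (simp add: powr_le1)

lemma sphere_ln_infnorm_d_le: "q * ln (infnorm_d d z) \<le> ln (\<Sum>i<d. norm (z i) powr q)"
proof -
  have "ln (infnorm_d d z powr q) \<le> ln (\<Sum>i<d. norm (z i) powr q)"
    using sphere_infnorm_d_powr_le_sum[of q] sphere_infnorm_d_pos sphere_sum_norm_powr_pos[of q]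
    by (subst ln_le_cancel_iff) auto
  then show ?thesis
    using sphere_infnorm_d_pos by (simp add: ln_powr)
qed

lemma sphere_abs_ln_sum_norm_powr_le:
  assumes q: "q > 0"
  shows "\<bar>ln (\<Sum>i<d. norm (z i) powr q)\<bar> \<le> (q / 2 + 1) * ln d"
proof -
  have "ln (\<Sum>i<d. norm (z i) powr q) \<le> ln d"
    using sphere_sum_norm_powr_pos[of q] sphere_sum_norm_powr_le[OF q] by simp
  moreover have "q * ln (infnorm_d d z) \<le> ln (\<Sum>i<d. norm (z i) powr q)"
    by (rule sphere_ln_infnorm_d_le)
  moreover have "- ln d / 2 \<le> ln (infnorm_d d z)"
    using sphere_ln_inv_infnorm_d_bounds(2) sphere_infnorm_d_pos by (simp add: ln_div)
  moreover have "0 \<le> ln d" "0 \<le> q * ln d"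
    using sphere_dim_ge_one q by simp_all
  moreover have "(q / 2 + 1) * ln d = q * ln d / 2 + ln d"
    by (simp add: algebra_simps)
  ultimately show ?thesis
    using q mult_left_mono[of "- ln d / 2" "ln (infnorm_d d z)" q] unfolding abs_le_iff by linarith
qed

lemma sphere_ln_inv_pnorm: "p > 0 \<Longrightarrow> ln (1 / pnorm d p z) = - ln (\<Sum>i<d. norm (z i) powr p) / p"
  using sphere_sum_norm_powr_pos[of p] by (simp add: pnorm_def ln_div ln_powr)

lemma sphere_ln_inv_infnorm_d_ge: "q > 0 \<Longrightarrow> - ln (\<Sum>i<d. norm (z i) powr q) / q \<le> ln (1 / infnorm_d d z)"
  using sphere_ln_infnorm_d_le[of q] sphere_infnorm_d_pos by (simp add: ln_div field_simps)

lemma sphere_ln_sum_norm_powr_ge: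
  assumes p: "p \<ge> 2"
  shows "(1 - p / 2) * ln d \<le> ln (\<Sum>i<d. norm (z i) powr p)"
proof -
  let ?S = "\<Sum>i<d. norm (z i) powr p"
  have "1 = (\<Sum>i<d. (norm (z i) powr p) powr (2 / p))"
    using sphere p by (simp add: sqnorm_def powr_powr flip: powr_numeral)
  also have "\<dots> \<le> d powr (1 - 2 / p) * ?S powr (2 / p)"
    using p sum_powr_le_card_powr[of "{..<d}" "\<lambda>i. norm (z i) powr p" "2 / p", unfolded card_lessThan]
      sphere_indices_nonempty by simp
  finally have "0 \<le> (1 - 2 / p) * ln d + (2 / p) * ln ?S"
    using sphere_sum_norm_powr_pos[of p] sphere_dim_ge_one by (simp add: ln_mult ln_powr flip: ln_le_cancel_iff)
  from mult_left_mono[OF this, of "p / 2"] show ?thesis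
    using p by (simp add: algebra_simps)
qed

lemma sphere_ln_sum_norm_powr_le:
  assumes p: "0 < p" "p \<le> 2"
  shows "ln (\<Sum>i<d. norm (z i) powr p) \<le> (1 - p / 2) * ln d"
proof -
  have "(norm (z i) powr 2) powr (p / 2) = norm (z i) powr p" for i
    by (simp only: powr_powr) simp
  then have "(\<Sum>i<d. norm (z i) powr p) = (\<Sum>i<d. (norm (z i) powr 2) powr (p / 2))"
    by simp
  also have "\<dots> \<le> d powr (1 - p / 2) * (\<Sum>i<d. norm (z i) powr 2) powr (p / 2)"
    using p sum_powr_le_card_powr[of "{..<d}" "\<lambda>i. norm (z i) powr 2" "p / 2", unfolded card_lessThan]
      sphere_indices_nonempty by simp
  also have "\<dots> = d powr (1 - p / 2)"
    using sphere by (simp add: sqnorm_def flip: powr_numeral)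
  finally show ?thesis
    using sphere_sum_norm_powr_pos[of p] sphere_dim_ge_one by (simp add: ln_powr flip: ln_le_cancel_iff)
qed

lemma sphere_ln_sum_norm_powr_dual:
  assumes pr: "p > 0" "r > 0" "p + r = 4"
  shows "0 \<le> ln (\<Sum>i<d. norm (z i) powr p) + ln (\<Sum>i<d. norm (z i) powr r)"
proof -
  have product: "norm (z i) powr (p / 2) * norm (z i) powr (r / 2) = (norm (z i))\<^sup>2" for i
  proof -
    have half_sum: "p / 2 + r / 2 = 2"
      using pr by linarith
    show ?thesis
      using pr by (cases "z i = 0") (simp_all add: half_sum flip: powr_add powr_numeral)
  qed
  have square: "(norm (z i) powr (t / 2))\<^sup>2 = norm (z i) powr t" for i t
    by (simp add: power2_eq_square flip: powr_add)
  have "1 = (\<Sum>i<d. norm (z i) powr (p / 2) * norm (z i) powr (r / 2))\<^sup>2"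
    using sphere by (simp add: product sqnorm_def)
  also have "\<dots> \<le> (\<Sum>i<d. norm (z i) powr p) * (\<Sum>i<d. norm (z i) powr r)"
    using Cauchy_Schwarz_ineq_sum[of "\<lambda>i. norm (z i) powr (p / 2)" "\<lambda>i. norm (z i) powr (r / 2)" "{..<d}"]
    by (simp add: square)
  finally have "0 \<le> ln ((\<Sum>i<d. norm (z i) powr p) * (\<Sum>i<d. norm (z i) powr r))"
    by (rule ln_ge_zero)
  then show ?thesis
    using sphere_sum_norm_powr_pos[of p] sphere_sum_norm_powr_pos[of r] by (simp add: ln_mult)
qed

end

section \<open>Logarithmic moments of power sums\<close>

context
  fixes d :: nat
  assumes d: "d \<ge> 1"
begin

lemma integrable_sum_norm_powr:
  "q > 0 \<Longrightarrow> integrable (cone_measure TYPE('a::euclidean_space) d) (\<lambda>z. \<Sum>i<d. norm (z i) powr q)"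
proof (intro integrable_cone_measure[OF d, where C=d])
  fix z :: "nat \<Rightarrow> 'a" assume "sqnorm {..<d} z = 1" "q > 0"
  then show "\<bar>\<Sum>i<d. norm (z i) powr q\<bar> \<le> d"
    using sphere_sum_norm_powr_le sphere_sum_norm_powr_pos[of d z q] by simp
qed simp

lemma integrable_ln_sum_norm_powr:
  "q > 0 \<Longrightarrow> integrable (cone_measure TYPE('a::euclidean_space) d) (\<lambda>z. ln (\<Sum>i<d. norm (z i) powr q))"
  by (intro integrable_cone_measure[OF d, where C="(q / 2 + 1) * ln d"] sphere_abs_ln_sum_norm_powr_le) auto

lemma integrable_ln_inv_infnorm_d:
  "integrable (cone_measure TYPE('a::euclidean_space) d) (\<lambda>z. ln (1 / infnorm_d d z))"
proof (intro integrable_cone_measure[OF d, where C="ln d / 2"])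
  fix z :: "nat \<Rightarrow> 'a" assume "sqnorm {..<d} z = 1"
  then show "\<bar>ln (1 / infnorm_d d z)\<bar> \<le> ln d / 2"
    using sphere_ln_inv_infnorm_d_bounds[of d z] by simp
qed simp

lemma sphere_integral_ln_inv_pnorm:
  assumes p: "p > 0"
  shows "sphere_integral TYPE('a::euclidean_space) d (\<lambda>z. ln (1 / pnorm d p z)) =
    - (\<integral>z. ln (\<Sum>i<d. norm (z i) powr p) \<partial>cone_measure TYPE('a) d) / p"
proof -
  have "sphere_integral TYPE('a) d (\<lambda>z. ln (1 / pnorm d p z)) = (\<integral>z. ln (1 / pnorm d p z) \<partial>cone_measure TYPE('a) d)"
    by (rule sphere_integral_eq_integral[OF d]) measurable
  also have "\<dots> = (\<integral>z. - ln (\<Sum>i<d. norm (z i) powr p) / p \<partial>cone_measure TYPE('a) d)"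
    using AE_cone_measure_sphere[OF d, where 'a='a]
    by (intro integral_cong_AE) (auto elim!: eventually_mono simp: sphere_ln_inv_pnorm p)
  finally show ?thesis
    by simp
qed

lemma sphere_integral_ln_inv_infnorm_d:
  "sphere_integral TYPE('a::euclidean_space) d (\<lambda>z. ln (1 / infnorm_d d z)) =
    (\<integral>z. ln (1 / infnorm_d d z) \<partial>cone_measure TYPE('a) d)"
  by (rule sphere_integral_eq_integral[OF d]) measurable

lemma sphere_integral_ln_inv_infnorm_d_le:
  "sphere_integral TYPE('a::euclidean_space) d (\<lambda>z. ln (1 / infnorm_d d z)) \<le> ln d / 2"
  unfolding sphere_integral_ln_inv_infnorm_d
  by (intro integral_cone_measure_le_const[OF d integrable_ln_inv_infnorm_d] sphere_ln_inv_infnorm_d_bounds)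

lemma sphere_integral_ln_inv_infnorm_d_ge:
  assumes q: "q > 0"
  shows "- (\<integral>z. ln (\<Sum>i<d. norm (z i) powr q) \<partial>cone_measure TYPE('a::euclidean_space) d) / q
    \<le> sphere_integral TYPE('a) d (\<lambda>z. ln (1 / infnorm_d d z))"
proof -
  have "(\<integral>z. - ln (\<Sum>i<d. norm (z i) powr q) / q \<partial>cone_measure TYPE('a) d)
      \<le> (\<integral>z. ln (1 / infnorm_d d z) \<partial>cone_measure TYPE('a) d)"
    using integrable_ln_sum_norm_powr[OF q, where 'a='a]
    by (intro integral_cone_measure_mono[OF d] integrable_ln_inv_infnorm_d sphere_ln_inv_infnorm_d_ge q) simp
  then show ?thesis
    by (simp add: sphere_integral_ln_inv_infnorm_d)
qed

lemma integral_ln_sum_norm_powr_ge: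
  "p \<ge> 2 \<Longrightarrow> (1 - p / 2) * ln d \<le> (\<integral>z. ln (\<Sum>i<d. norm (z i) powr p) \<partial>cone_measure TYPE('a::euclidean_space) d)"
  by (intro integral_cone_measure_ge_const[OF d] integrable_ln_sum_norm_powr sphere_ln_sum_norm_powr_ge) auto

lemma integral_ln_sum_norm_powr_le:
  "0 < p \<Longrightarrow> p \<le> 2 \<Longrightarrow> (\<integral>z. ln (\<Sum>i<d. norm (z i) powr p) \<partial>cone_measure TYPE('a::euclidean_space) d) \<le> (1 - p / 2) * ln d"
  by (intro integral_cone_measure_le_const[OF d] integrable_ln_sum_norm_powr sphere_ln_sum_norm_powr_le)

lemma integral_ln_sum_norm_powr_dual:
  assumes pr: "p > 0" "r > 0" "p + r = 4"
  shows "- (\<integral>z. ln (\<Sum>i<d. norm (z i) powr r) \<partial>cone_measure TYPE('a::euclidean_space) d)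
    \<le> (\<integral>z. ln (\<Sum>i<d. norm (z i) powr p) \<partial>cone_measure TYPE('a) d)"
proof -
  have "0 \<le> (\<integral>z. ln (\<Sum>i<d. norm (z i) powr p) + ln (\<Sum>i<d. norm (z i) powr r) \<partial>cone_measure TYPE('a) d)"
    using pr integrable_ln_sum_norm_powr[where 'a='a]
    by (intro integral_cone_measure_ge_const[OF d] sphere_ln_sum_norm_powr_dual) auto
  then show ?thesis
    using pr integrable_ln_sum_norm_powr[where 'a='a] by simp
qed

lemma abs_integral_ln_sum_norm_powr_le:
  assumes q: "q > 0"
  shows "\<bar>\<integral>z. ln (\<Sum>i<d. norm (z i) powr q) \<partial>cone_measure TYPE('a::euclidean_space) d\<bar> \<le> (q / 2 + 1) * ln d"
proof -
  have "\<bar>ln (\<Sum>i<d. norm (z i) powr q)\<bar> \<le> (q / 2 + 1) * ln d" if "sqnorm {..<d} z = 1" for z :: "nat \<Rightarrow> 'a"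
    by (rule sphere_abs_ln_sum_norm_powr_le[OF that q])
  then have "(\<integral>z. ln (\<Sum>i<d. norm (z i) powr q) \<partial>cone_measure TYPE('a) d) \<le> (q / 2 + 1) * ln d"
    and "- ((q / 2 + 1) * ln d) \<le> (\<integral>z. ln (\<Sum>i<d. norm (z i) powr q) \<partial>cone_measure TYPE('a) d)"
    unfolding abs_le_iff
    by (intro integral_cone_measure_le_const[OF d] integral_cone_measure_ge_const[OF d]
        integrable_ln_sum_norm_powr[OF q]; force)+
  then show ?thesis
    by linarith
qed

end

context
  fixes d :: nat
  assumes d: "d \<ge> 2"
begin

lemma nn_integral_cone_measure_norm_powr_le:
  assumes i: "i < d" and q: "q > 0"
  shows "(\<integral>\<^sup>+z. ennreal (norm (z i) powr q) \<partial>cone_measure TYPE('a::euclidean_space) d)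
    \<le> ennreal ((sqrt 2 ^ DIM('a) + 1) * (16 * q / d) powr (q / 2))"
proof -
  let ?M = "Kd_measure TYPE('a) d" and ?B = "unit_ball_d TYPE('a) d"
  have d1: "d \<ge> 1"
    using d by simp
  have [measurable]: "(\<lambda>z. z i) \<in> borel_measurable ?M"
    using i unfolding Kd_measure_def by simp
  have "(\<lambda>z. ennreal (norm (z i) powr q)) \<in> borel_measurable ?M"
    by measurable
  then have "(\<integral>\<^sup>+z. ennreal (norm (z i) powr q) \<partial>cone_measure TYPE('a) d) =
      (\<integral>\<^sup>+x. ennreal ((norm (x i) / sqrt (sqnorm {..<d} x)) powr q) * indicator ?B x \<partial>?M) / emeasure ?M ?B"
    using i by (simp add: nn_integral_cone_measure[OF d1] norm_sphere_proj)
  also have "\<dots> \<le> ennreal ((sqrt 2 ^ DIM('a) + 1) * (16 * q / d) powr (q / 2)) * emeasure ?M ?B / emeasure ?M ?B"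
    using nn_integral_sqball_normalized_powr_le[of "{..<d}" i q, where 'a='a] d i q
    by (intro divide_right_mono_ennreal) (simp add: Kd_measure_def unit_ball_d_eq_sqball)
  also have "\<dots> = ennreal ((sqrt 2 ^ DIM('a) + 1) * (16 * q / d) powr (q / 2))"
    using emeasure_unit_ball_d[OF d1, where 'a='a] by (intro ennreal_mult_divide_eq) auto
  finally show ?thesis .
qed

lemma integral_sum_norm_powr_le:
  assumes q: "q > 0"
  shows "(\<integral>z. (\<Sum>i<d. norm (z i) powr q) \<partial>cone_measure TYPE('a::euclidean_space) d)
    \<le> d * ((sqrt 2 ^ DIM('a) + 1) * (16 * q / d) powr (q / 2))"
proof -
  let ?C = "(sqrt 2 ^ DIM('a) + 1) * (16 * q / d) powr (q / 2)"
  have d1: "d \<ge> 1"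
    using d by simp
  have component[measurable]: "(\<lambda>z. ennreal (norm (z i) powr q)) \<in> borel_measurable (cone_measure TYPE('a) d)"
    if "i < d" for i
  proof -
    have [measurable]: "(\<lambda>z. z i) \<in> borel_measurable (Kd_measure TYPE('a) d)"
      using that unfolding Kd_measure_def by simp
    show ?thesis
      by measurable
  qed
  have "ennreal (\<integral>z. (\<Sum>i<d. norm (z i) powr q) \<partial>cone_measure TYPE('a) d) =
      (\<integral>\<^sup>+z. (\<Sum>i<d. ennreal (norm (z i) powr q)) \<partial>cone_measure TYPE('a) d)"
    using integrable_sum_norm_powr[OF d1 q, where 'a='a]
    by (subst nn_integral_eq_integral[symmetric]) (auto intro!: sum_nonneg nn_integral_cong simp: sum_ennreal)
  also have "\<dots> = (\<Sum>i<d. \<integral>\<^sup>+z. ennreal (norm (z i) powr q) \<partial>cone_measure TYPE('a) d)"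
    by (intro nn_integral_sum component) simp
  also have "\<dots> \<le> (\<Sum>i<d. ennreal ?C)"
    using q by (intro sum_mono nn_integral_cone_measure_norm_powr_le) auto
  also have "\<dots> = ennreal (d * ?C)"
    by (simp add: ennreal_of_nat_eq_real_of_nat ennreal_mult)
  finally show ?thesis
    by (subst (asm) ennreal_le_iff) auto
qed

lemma integral_ln_sum_norm_powr_le_moment:
  assumes q: "q > 0"
  shows "(\<integral>z. ln (\<Sum>i<d. norm (z i) powr q) \<partial>cone_measure TYPE('a::euclidean_space) d)
    \<le> (1 - q / 2) * ln d + (q / 2) * ln (16 * q) + ln (sqrt 2 ^ DIM('a) + 1)"
proof -
  let ?A = "d * ((sqrt 2 ^ DIM('a) + 1) * (16 * q / d) powr (q / 2))"
  have d1: "d \<ge> 1"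
    using d by simp
  interpret prob_space "cone_measure TYPE('a) d"
    by (rule prob_space_cone_measure[OF d1])
  have C: "sqrt 2 ^ DIM('a) + 1 > 0"
    by (intro add_nonneg_pos) auto
  then have "?A > 0"
    using d q by (intro mult_pos_pos) auto
  have "(\<integral>z. ln (\<Sum>i<d. norm (z i) powr q) \<partial>cone_measure TYPE('a) d) \<le> ln ?A"
    using AE_cone_measure_sphere[OF d1, where 'a='a] \<open>?A > 0\<close>
    by (intro integral_ln_le integrable_sum_norm_powr[OF d1 q] integrable_ln_sum_norm_powr[OF d1 q]
        integral_sum_norm_powr_le q)
      (auto elim!: eventually_mono intro: sphere_sum_norm_powr_pos)
  also have "ln ?A = ln d + ln (sqrt 2 ^ DIM('a) + 1) + (q / 2) * (ln (16 * q) - ln d)"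
    using d q C by (simp add: ln_mult ln_powr ln_div)
  also have "\<dots> = (1 - q / 2) * ln d + (q / 2) * ln (16 * q) + ln (sqrt 2 ^ DIM('a) + 1)"
    by (simp add: algebra_simps)
  finally show ?thesis .
qed

end

lemma integral_ln_sum_norm_powr_le_const:
  assumes d: "d \<ge> 1" and q: "q > 0"
  shows "(\<integral>z. ln (\<Sum>i<d. norm (z i) powr q) \<partial>cone_measure TYPE('a::euclidean_space) d)
    \<le> (1 - q / 2) * ln d + (\<bar>q / 2 * ln (16 * q)\<bar> + ln (sqrt 2 ^ DIM('a) + 1))"
proof (cases "d = 1")
  case True
  have "\<bar>\<integral>z. ln (\<Sum>i<d. norm (z i) powr q) \<partial>cone_measure TYPE('a) d\<bar> \<le> (q / 2 + 1) * ln d"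
    by (rule abs_integral_ln_sum_norm_powr_le[OF d q])
  moreover have "ln (real d) = 0" "0 \<le> ln (sqrt 2 ^ DIM('a) + 1)"
    using True by simp_all
  ultimately show ?thesis
    by simp
next
  case False
  then show ?thesis
    using integral_ln_sum_norm_powr_le_moment[of d q, where 'a='a] d q by simp
qed

(* For q >= 2 the lower bound holds pointwise and the upper one comes from the moment estimate;
   for q < 2 the roles are exchanged, the lower bound being inherited from 4 - q > 2. *)
lemma integral_ln_sum_norm_powr_asymp:
  assumes q: "q > 0"
  shows "\<exists>c. \<forall>d\<ge>1. \<bar>(\<integral>z. ln (\<Sum>i<d. norm (z i) powr q) \<partial>cone_measure TYPE('a::euclidean_space) d) - (1 - q / 2) * ln d\<bar> \<le> c"
proof -
  define E where "E d r = (\<integral>z. ln (\<Sum>i<d. norm (z i) powr r) \<partial>cone_measure TYPE('a) d)" for d r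
  define c where "c r = \<bar>r / 2 * ln (16 * r)\<bar> + ln (sqrt 2 ^ DIM('a) + 1)" for r
  have c_nonneg: "c r \<ge> 0" for r
    by (simp add: c_def add_nonneg_nonneg)
  have upper: "E d r \<le> (1 - r / 2) * ln d + c r" if "d \<ge> 1" "r > 0" for d r
    unfolding E_def c_def by (rule integral_ln_sum_norm_powr_le_const[OF that])
  have "\<bar>E d q - (1 - q / 2) * ln d\<bar> \<le> c q + c (4 - q)" if d: "d \<ge> 1" for d
  proof (cases "q \<ge> 2")
    case True
    then show ?thesis
      using integral_ln_sum_norm_powr_ge[OF d True, where 'a='a] upper[OF d q] c_nonneg[of "4 - q"]
      by (simp add: E_def)
  next
    case False
    then have "- E d (4 - q) \<le> E d q" "E d (4 - q) \<le> (1 - (4 - q) / 2) * ln d + c (4 - q)"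
      using integral_ln_sum_norm_powr_dual[OF d q, of "4 - q", where 'a='a] upper[OF d, of "4 - q"]
      by (simp_all add: E_def)
    moreover have "E d q \<le> (1 - q / 2) * ln d"
      using integral_ln_sum_norm_powr_le[OF d q, where 'a='a] False by (simp add: E_def)
    moreover have "(1 - (4 - q) / 2) * ln d = - ((1 - q / 2) * ln d)"
      by (simp add: field_simps)
    ultimately show ?thesis
      using c_nonneg[of q] c_nonneg[of "4 - q"] unfolding abs_le_iff by (intro conjI; linarith)
  qed
  then show ?thesis
    unfolding E_def by blast
qed

lemma exp_asymp_powr_of_ln_asymp:
  fixes S :: "nat \<Rightarrow> real"
  assumes "\<forall>d\<ge>1. \<bar>S d - e * ln d\<bar> \<le> c"
  shows "\<exists>L>0. \<forall>d. d \<ge> 1 \<longrightarrow> exp (S d) \<le> L * real d powr e \<and> real d powr e \<le> L * exp (S d)"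
proof (intro exI[of _ "exp c"] conjI allI impI)
  fix d :: nat assume d: "d \<ge> 1"
  then have "S d \<le> e * ln d + c" "e * ln d \<le> c + S d"
    using assms by (auto simp: abs_le_iff)
  then have "exp (S d) \<le> exp (e * ln d + c)" "exp (e * ln d) \<le> exp (c + S d)"
    by simp_all
  then show "exp (S d) \<le> exp c * real d powr e" "real d powr e \<le> exp c * exp (S d)"
    using d by (simp_all add: powr_def exp_add mult.commute)
qed simp

lemma sphere_integral_ln_inv_pnorm_asymp:
  assumes p: "p > 0"
  shows "\<exists>L>0. \<forall>d::nat. d \<ge> 1 \<longrightarrow>
    exp (sphere_integral TYPE('a::euclidean_space) d (\<lambda>z. ln (1 / pnorm d p z))) \<le> L * real d powr (1/2 - 1/p)
    \<and> real d powr (1/2 - 1/p) \<le> L * exp (sphere_integral TYPE('a) d (\<lambda>z. ln (1 / pnorm d p z)))"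
proof -
  obtain c where c: "\<forall>d\<ge>1. \<bar>(\<integral>z. ln (\<Sum>i<d. norm (z i) powr p) \<partial>cone_measure TYPE('a) d) - (1 - p / 2) * ln d\<bar> \<le> c"
    using integral_ln_sum_norm_powr_asymp[of p, where 'a='a] p by auto
  have "\<bar>sphere_integral TYPE('a) d (\<lambda>z. ln (1 / pnorm d p z)) - (1/2 - 1/p) * ln d\<bar> \<le> c / p" if d: "d \<ge> 1" for d
  proof -
    have "sphere_integral TYPE('a) d (\<lambda>z. ln (1 / pnorm d p z)) - (1/2 - 1/p) * ln d =
        - ((\<integral>z. ln (\<Sum>i<d. norm (z i) powr p) \<partial>cone_measure TYPE('a) d) - (1 - p / 2) * ln d) / p"
      using p by (simp add: sphere_integral_ln_inv_pnorm[OF d] field_simps)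
    then show ?thesis
      using c d p by (simp add: abs_minus_commute divide_right_mono)
  qed
  then show ?thesis
    by (intro exp_asymp_powr_of_ln_asymp) blast
qed

(* The choice q = ln d keeps the error terms (ln d) / q and C / q bounded. *)
lemma sphere_integral_ln_inv_infnorm_d_ge_ln_ln:
  assumes d: "d \<ge> 2"
  shows "(ln d - ln (ln d)) / 2 - (1 + ln 4 + 2 * ln (sqrt 2 ^ DIM('a) + 1))
    \<le> sphere_integral TYPE('a::euclidean_space) d (\<lambda>z. ln (1 / infnorm_d d z))"
proof -
  define C where "C = ln (sqrt 2 ^ DIM('a) + 1)"
  define q where "q = ln (real d)"
  define E where "E = (\<integral>z. ln (\<Sum>i<d. norm (z i) powr q) \<partial>cone_measure TYPE('a) d)"
  have "ln 2 \<le> q"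
    using d by (simp add: q_def)
  then have q: "q \<ge> 1 / 2"
    using ln2_ge_two_thirds by linarith
  have "C \<ge> 0"
    by (simp add: C_def)
  then have "C * 1 \<le> C * (2 * q)"
    using q by (intro mult_left_mono) auto
  then have "C / q \<le> 2 * C"
    using q by (simp add: field_simps)
  have "E \<le> (1 - q / 2) * q + (q / 2) * ln (16 * q) + C"
    using integral_ln_sum_norm_powr_le_moment[OF d, of q, where 'a='a] q by (simp add: E_def C_def q_def)
  then have "- ((1 - q / 2) * q + (q / 2) * ln (16 * q) + C) / q \<le> - E / q"
    using q by (intro divide_right_mono) auto
  also have "\<dots> \<le> sphere_integral TYPE('a) d (\<lambda>z. ln (1 / infnorm_d d z))"
    using sphere_integral_ln_inv_infnorm_d_ge[of d q, where 'a='a] d q by (simp add: E_def)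
  finally have "q / 2 - 1 - ln (16 * q) / 2 - C / q \<le> sphere_integral TYPE('a) d (\<lambda>z. ln (1 / infnorm_d d z))"
    using q by (simp add: field_simps)
  moreover have "ln (16 * q) / 2 = ln 4 + ln q / 2"
    using q by (simp add: ln_mult ln_realpow[of 4 2, simplified])
  ultimately show ?thesis
    using \<open>C / q \<le> 2 * C\<close> unfolding C_def[symmetric] q_def[symmetric] by argo
qed

lemma sphere_integral_ln_inv_infnorm_d_asymp:
  "\<exists>L>0. \<forall>d::nat. d \<ge> 2 \<longrightarrow>
    sqrt (real d / ln (real d)) \<le> L * exp (sphere_integral TYPE('a::euclidean_space) d (\<lambda>z. ln (1 / infnorm_d d z)))
    \<and> exp (sphere_integral TYPE('a) d (\<lambda>z. ln (1 / infnorm_d d z))) \<le> L * sqrt (real d)"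
proof (intro exI[of _ "exp (1 + ln 4 + 2 * ln (sqrt 2 ^ DIM('a) + 1))"] conjI allI impI)
  let ?c = "1 + ln 4 + 2 * ln (sqrt 2 ^ DIM('a) + 1)"
  have "0 \<le> ln (sqrt 2 ^ DIM('a) + 1)"
    by simp
  then have "1 \<le> exp ?c"
    by simp
  fix d :: nat assume d: "d \<ge> 2"
  let ?S = "sphere_integral TYPE('a) d (\<lambda>z. ln (1 / infnorm_d d z))"
  have "ln (real d) > 0"
    using d by simp
  then have "sqrt (real d / ln d) = exp ((ln d - ln (ln d)) / 2)"
    using d by (simp add: powr_half_sqrt[symmetric] powr_def ln_div)
  also have "\<dots> \<le> exp (?c + ?S)"
    using sphere_integral_ln_inv_infnorm_d_ge_ln_ln[OF d, where 'a='a] by (simp only: exp_le_cancel_iff)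
  finally show "sqrt (real d / ln d) \<le> exp ?c * exp ?S"
    by (simp add: exp_add)
  have "exp ?S \<le> exp (ln d / 2)"
    using sphere_integral_ln_inv_infnorm_d_le[of d, where 'a='a] d by simp
  also have "\<dots> = sqrt d"
    using d by (simp add: powr_half_sqrt[symmetric] powr_def)
  also have "\<dots> \<le> exp ?c * sqrt d"
    using mult_right_mono[OF \<open>1 \<le> exp ?c\<close>, of "sqrt d"] by simp
  finally show "exp ?S \<le> exp ?c * sqrt d" .
qed simp

theorem lemma2p3:
  shows
   "(\<forall>p::real. 1 \<le> p \<longrightarrow>
      (\<exists>L>0. \<forall>d::nat. d \<ge> 1 \<longrightarrow>
         exp (sphere_integral TYPE(real) d (\<lambda>z. ln (1 / pnorm d p z))) \<le> L * real d powr (1/2 - 1/p)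
       \<and> real d powr (1/2 - 1/p) \<le> L * exp (sphere_integral TYPE(real) d (\<lambda>z. ln (1 / pnorm d p z)))))
  \<and> (\<forall>p::real. 1 \<le> p \<longrightarrow>
      (\<exists>L>0. \<forall>d::nat. d \<ge> 1 \<longrightarrow>
         exp (sphere_integral TYPE(complex) d (\<lambda>z. ln (1 / pnorm d p z))) \<le> L * real d powr (1/2 - 1/p)
       \<and> real d powr (1/2 - 1/p) \<le> L * exp (sphere_integral TYPE(complex) d (\<lambda>z. ln (1 / pnorm d p z)))))
  \<and> (\<exists>L>0. \<forall>d::nat. d \<ge> 2 \<longrightarrow>
         sqrt (real d / ln (real d)) \<le> L * exp (sphere_integral TYPE(real) d (\<lambda>z. ln (1 / infnorm_d d z)))
       \<and> exp (sphere_integral TYPE(real) d (\<lambda>z. ln (1 / infnorm_d d z))) \<le> L * sqrt (real d))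
  \<and> (\<exists>L>0. \<forall>d::nat. d \<ge> 2 \<longrightarrow>
         sqrt (real d / ln (real d)) \<le> L * exp (sphere_integral TYPE(complex) d (\<lambda>z. ln (1 / infnorm_d d z)))
       \<and> exp (sphere_integral TYPE(complex) d (\<lambda>z. ln (1 / infnorm_d d z))) \<le> L * sqrt (real d))"
proof -
  have "0 < p" if "1 \<le> p" for p :: real
    using that by simp
  then show ?thesis
    using sphere_integral_ln_inv_pnorm_asymp[where 'a=real] sphere_integral_ln_inv_pnorm_asymp[where 'a=complex]
      sphere_integral_ln_inv_infnorm_d_asymp[where 'a=real] sphere_integral_ln_inv_infnorm_d_asymp[where 'a=complex]
    by blast
qed

end
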